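(* Let $\beta\ge0$, $0<a\le1+\beta$, and $x$ real with $0\le x\le\frac{1+\beta}{a}x<1$. For integers $j,k\ge0$ define $$\alpha_{j,k}=\frac{(1-j)_k}{k!}B^{(j)}_k(0)\,(1+\beta)^{-k},\qquad \gamma_{j,k}=(-1)^k\frac{(j+1)_k}{k!}B^{(-j)}_k(0)\,a^{-k}.$$ Then for every positive integer $n$ and every $t>0$, $$\left|{}_2F_1\!\left(\begin{matrix}1,t(1+\beta)\\ at+1\end{matrix};x\right)-\sum_{i=0}^{n-1}\sum_{j=0}^{i}\sum_{k=0}^\infty\frac{\gamma_{k,j}\alpha_{k,i-j}}{t^i}\left(\frac{1+\beta}{a}x\right)^k\right|\le\frac{(2n)!}{2}\frac{(1+\beta)x\,(a+(1+\beta)x)}{a^{n+2}\left(1-\frac{(1+\beta)x}{a}\right)^{2n+1}}\frac1{t^n},$$ and consequently, as $t\to\infty$, one has the asymptotic series $${}_2F_1\!\left(\begin{matrix}1,t(1+\beta)\\ at+1\end{matrix};x\right)\sim\sum_{i=0}^\infty t^{-i}\left(\sum_{j=0}^{i}\sum_{k=0}^\infty\gamma_{k,j}\alpha_{k,i-j}\left(\frac{1+\beta}{a}x\right)^k\right).$$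
   Context: $(q)_0=1$, $(q)_n=q(q+1)\cdots(q+n-1)$. ${}_2F_1\!\left(\begin{matrix}a_1,a_2\\ d\end{matrix};x\right)=\sum_{n\ge0}\frac{(a_1)_n(a_2)_n}{(d)_n}\frac{x^n}{n!}$. The generalized Bernoulli numbers $B^{(j)}_k(0)$ (for integer $j$, possibly negative) are defined by $\left(\frac{s}{e^s-1}\right)^j=\sum_{k=0}^\infty\frac{s^k}{k!}B^{(j)}_k(0)$ for $|s|<2\pi$. (With these definitions, $\frac{((1+\beta)t)_j}{((1+\beta)t)^j}=\sum_k\alpha_{j,k}t^{-k}$ and, for $at>j$, $\frac{(at)^j}{(at+1)_j}=\sum_k\gamma_{j,k}t^{-k}$.) *)

theory Defs
  imports Complex_Main "HOL-Library.Landau_Symbols"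
begin

definition hyp2f1 :: "real \<Rightarrow> real \<Rightarrow> real \<Rightarrow> real \<Rightarrow> real" where
  "hyp2f1 a1 a2 d x =
     (\<Sum>n. pochhammer a1 n * pochhammer a2 n / pochhammer d n * x ^ n / fact n)"

text \<open>Generalized Bernoulli numbers B^(j)_k(0), j an integer (possibly negative):
  the coefficients of the expansion (s/(e^s-1))^j = sum_k s^k/k! B^(j)_k(0), |s| < 2 pi.
  (The point s = 0 is excluded, where the left side is a removable singularity.)\<close>
definition gen_bernoulli :: "int \<Rightarrow> nat \<Rightarrow> real" where
  "gen_bernoulli j k =
     (THE c. \<forall>s::real. s \<noteq> 0 \<and> \<bar>s\<bar> < 2 * pi \<longrightarrow>
        (\<lambda>m. s ^ m / fact m * c m) sums ((s / (exp s - 1)) powi j)) k"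

definition alpha_coef :: "real \<Rightarrow> nat \<Rightarrow> nat \<Rightarrow> real" where
  "alpha_coef \<beta> j k =
     pochhammer (1 - real j) k / fact k * gen_bernoulli (int j) k * (1 + \<beta>) powi (- int k)"

definition gamma_coef :: "real \<Rightarrow> nat \<Rightarrow> nat \<Rightarrow> real" where
  "gamma_coef a j k =
     (-1) ^ k * pochhammer (real j + 1) k / fact k * gen_bernoulli (- int j) k * a powi (- int k)"

definition expansion_coef :: "real \<Rightarrow> real \<Rightarrow> real \<Rightarrow> nat \<Rightarrow> real" where
  "expansion_coef \<beta> a x i =
     (\<Sum>j\<le>i. \<Sum>k. gamma_coef a k j * alpha_coef \<beta> k (i - j) * ((1 + \<beta>) / a * x) ^ k)"

end

(*
  Write y = (1 + \<beta>) x / a and u = 1 / t. The k-th term of the hypergeometric series is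
  y^k f_k(u) with f_k(u) = \<Prod>m<k. (1 + m u / (1 + \<beta>)) / (1 + (m + 1) u / a).
  The generating function (s / (e^s - 1))^j of the generalized Bernoulli numbers satisfies a
  first-order differential equation in s; the resulting recurrences show that \<alpha>_{k,i} and
  \<gamma>_{k,i} are the coefficients of u^i in \<Prod>m<k. (1 + m u / (1 + \<beta>)) and in
  \<Prod>m<k. 1 / (1 + (m + 1) u / a), so their Cauchy product is the Taylor series of f_k.
  Each factor (1 + p u) / (1 + q u) with 0 \<le> p \<le> q \<le> k / a is bounded by 1 for u \<ge> 0 and has
  Taylor coefficients and remainders bounded by (k/a)^n u^n, so the Taylor remainder of f_k is
  bounded by the coefficient binomial (n + k - 1) n (k/a)^n u^n of the k-th power of the geometric
  majorant. This is at most a combination of Pochhammer symbols in k whose generating function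
  in y is explicit, and summing over k gives the stated bound.
*)
theory Submission
  imports Defs "HOL-Complex_Analysis.Complex_Analysis"
begin

section \<open>Pochhammer symbols\<close>

lemma pochhammer_nonneg_of_nonneg:
  fixes x :: "'a::linordered_semidom"
  shows "0 \<le> x \<Longrightarrow> 0 \<le> pochhammer x n"
  unfolding pochhammer_prod by (intro prod_nonneg) auto

lemma pochhammer_mono:
  fixes x y :: "'a::linordered_semidom"
  assumes "0 \<le> x" and "x \<le> y"
  shows "pochhammer x n \<le> pochhammer y n"
  unfolding pochhammer_prod using assms by (intro prod_mono) auto

lemma power_le_pochhammer:
  fixes x :: "'a::linordered_semidom"
  assumes "0 \<le> x"
  shows "x ^ n \<le> pochhammer x n"
proof -
  have "x ^ n = (\<Prod>i<n. x)"
    by simp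
  also have "\<dots> \<le> (\<Prod>i<n. x + of_nat i)"
    using assms by (intro prod_mono) auto
  finally show ?thesis
    by (simp add: pochhammer_prod atLeast0LessThan)
qed

lemma pochhammer_mult_le:
  fixes x :: "'a::linordered_semidom"
  assumes "0 \<le> x"
  shows "pochhammer x m * pochhammer x n \<le> pochhammer x (m + n)"
  unfolding pochhammer_product'
  using assms by (intro mult_left_mono pochhammer_mono pochhammer_nonneg_of_nonneg) auto

lemma binomial_conv_pochhammer: "real ((n + k - 1) choose n) = pochhammer (real k) n / fact n"
  by (cases "n + k = 0") (auto simp: binomial_gbinomial gbinomial_pochhammer' of_nat_diff)

lemma binomial_times_power_le_pochhammer:
  "real ((n + k - 1) choose n) * real k ^ n \<le> pochhammer (real k) (2 * n) / fact n"
proof -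
  have "real ((n + k - 1) choose n) * real k ^ n \<le> pochhammer (real k) n / fact n * pochhammer (real k + real n) n"
    unfolding binomial_conv_pochhammer
  proof (intro mult_left_mono)
    have "real k ^ n \<le> (real k + real n) ^ n"
      by (intro power_mono) auto
    also have "\<dots> \<le> pochhammer (real k + real n) n"
      by (intro power_le_pochhammer) auto
    finally show "real k ^ n \<le> pochhammer (real k + real n) n" .
  qed (simp add: pochhammer_nonneg_of_nonneg)
  also have "\<dots> = pochhammer (real k) (2 * n) / fact n"
    by (simp add: pochhammer_product' mult_2)
  finally show ?thesis .
qed

lemma pochhammer_div_fact_swap:
  "pochhammer (real p + 1) k / fact k = pochhammer (real k + 1) p / (fact p :: real)"
proof -
  have "(fact (p + k) :: real) = fact p * pochhammer (real p + 1) k"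
    using pochhammer_product'[of "1::real" p k] by (simp add: pochhammer_fact[symmetric] add.commute)
  moreover have "(fact (p + k) :: real) = fact k * pochhammer (real k + 1) p"
    using pochhammer_product'[of "1::real" k p] by (simp add: pochhammer_fact[symmetric] add.commute)
  ultimately show ?thesis
    by (simp add: field_simps)
qed

lemma sums_pochhammer_power:
  fixes y :: real
  assumes "\<bar>y\<bar> < 1"
  shows "(\<lambda>k. pochhammer (real k + 1) p * y ^ k) sums (fact p / (1 - y) ^ Suc p)"
proof -
  have "(\<lambda>k. (- (real p + 1) gchoose k) * (- y) ^ k) sums (1 + - y) powr (- (real p + 1))"
    using assms by (intro gen_binomial_real) simp
  moreover have "(- (real p + 1) gchoose k) * (- y) ^ k = pochhammer (real k + 1) p * y ^ k / fact p" for k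
  proof -
    have "(- (real p + 1) gchoose k) * (- y) ^ k
        = ((-1) ^ k * (-1) ^ k) * (pochhammer (real p + 1) k / fact k) * y ^ k"
      by (simp add: gbinomial_pochhammer power_minus[of y k] add.commute mult_ac)
    also have "(-1::real) ^ k * (-1) ^ k = 1"
      by (simp flip: power_add)
    finally show ?thesis
      by (simp add: pochhammer_div_fact_swap)
  qed
  moreover have "(1 + - y) powr (- (real p + 1)) = 1 / (1 - y) ^ Suc p"
  proof -
    have "(1 + - y) powr (- (real p + 1)) = (1 - y) powr (- real (Suc p))"
      by (simp add: algebra_simps)
    also have "\<dots> = inverse ((1 - y) powr real (Suc p))"
      by (rule powr_minus)
    also have "(1 - y) powr real (Suc p) = (1 - y) ^ Suc p"
      using assms by (intro powr_realpow) simp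
    finally show ?thesis
      by (simp add: inverse_eq_divide)
  qed
  ultimately have "(\<lambda>k. pochhammer (real k + 1) p * y ^ k / fact p) sums (1 / (1 - y) ^ Suc p)"
    by simp
  from sums_mult[OF this, of "fact p"] show ?thesis
    by simp
qed

lemma sums_pochhammer_shifted_power:
  fixes y :: real
  assumes "\<bar>y\<bar> < 1" and "d < m"
  shows "(\<lambda>k. pochhammer (real k - real d) m * y ^ k) sums (y ^ Suc d * fact m / (1 - y) ^ Suc m)"
proof -
  define f where "f k = pochhammer (real k - real d) m * y ^ k" for k
  have "f (k + Suc d) = y ^ Suc d * (pochhammer (real k + 1) m * y ^ k)" for k
  proof -
    have "real (k + Suc d) - real d = real k + 1"
      by simp
    thus ?thesis
      unfolding f_def by (simp only: power_add mult_ac)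
  qed
  moreover have "(\<lambda>k. y ^ Suc d * (pochhammer (real k + 1) m * y ^ k)) sums (y ^ Suc d * (fact m / (1 - y) ^ Suc m))"
    by (rule sums_mult) (rule sums_pochhammer_power[OF assms(1)])
  ultimately have "(\<lambda>k. f (k + Suc d)) sums (y ^ Suc d * (fact m / (1 - y) ^ Suc m))"
    by simp
  hence "f sums (y ^ Suc d * (fact m / (1 - y) ^ Suc m) + (\<Sum>k<Suc d. f k))"
    by (simp only: sums_iff_shift)
  moreover have "(\<Sum>k<Suc d. f k) = 0"
  proof (intro sum.neutral ballI)
    fix k assume "k \<in> {..<Suc d}"
    hence shift: "real k - real d = - of_nat (d - k)" and "d - k < m"
      using assms by auto
    have "pochhammer (- of_nat (d - k) :: real) m = 0"
      using \<open>d - k < m\<close> by (simp add: pochhammer_of_nat_eq_0_iff)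
    thus "f k = 0"
      unfolding f_def shift by simp
  qed
  ultimately have "f sums (y ^ Suc d * (fact m / (1 - y) ^ Suc m))"
    by simp
  thus ?thesis
    unfolding f_def by (simp add: times_divide_eq_right)
qed

(* Averaging the two Pochhammer symbols makes the estimate below exact for n = 1, where both
   sides equal k\<^sup>2; for n \<ge> 2 the cruder bound with pochhammer k (2n) / n! suffices. *)
definition remainder_weight :: "nat \<Rightarrow> nat \<Rightarrow> real" where
  "remainder_weight n k = (pochhammer (real k) (2 * n) + pochhammer (real k - 1) (2 * n)) / 2"

lemma binomial_times_power_le_remainder_weight:
  assumes "1 \<le> n"
  shows "real ((n + k - 1) choose n) * real k ^ n \<le> remainder_weight n k"
proof (cases "k = 0")
  case True
  have "pochhammer (- 1 :: real) (2 * n) = 0"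
    using assms pochhammer_of_nat_eq_0_iff[of 1 "2 * n"] by simp
  with True assms show ?thesis
    by (simp add: remainder_weight_def pochhammer_0_left binomial_eq_0)
next
  case False
  have nonneg: "0 \<le> pochhammer (real k - 1) (2 * n)"
    using False by (intro pochhammer_nonneg_of_nonneg) auto
  show ?thesis
  proof (cases "n = 1")
    case True
    thus ?thesis
      by (simp add: remainder_weight_def numeral_2_eq_2 pochhammer_Suc algebra_simps power2_eq_square)
  next
    case False
    hence "(2 :: real) \<le> fact n"
      using assms fact_mono[of 2 n, where 'a = real] by simp
    hence "pochhammer (real k) (2 * n) / fact n \<le> pochhammer (real k) (2 * n) / 2"
      by (intro divide_left_mono pochhammer_nonneg_of_nonneg) auto
    also have "\<dots> \<le> remainder_weight n k"
      unfolding remainder_weight_def using nonneg by (intro divide_right_mono) auto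
    finally show ?thesis
      using binomial_times_power_le_pochhammer[of n k] by linarith
  qed
qed

lemma remainder_weight_sums:
  fixes y :: real
  assumes "\<bar>y\<bar> < 1" and "1 \<le> n"
  shows "(\<lambda>k. remainder_weight n k * y ^ k) sums (fact (2 * n) / 2 * (y * (1 + y)) / (1 - y) ^ (2 * n + 1))"
proof -
  have "(\<lambda>k. (pochhammer (real k - real 0) (2 * n) * y ^ k + pochhammer (real k - real 1) (2 * n) * y ^ k) / 2)
      sums ((y ^ Suc 0 * fact (2 * n) / (1 - y) ^ Suc (2 * n) + y ^ Suc 1 * fact (2 * n) / (1 - y) ^ Suc (2 * n)) / 2)"
    by (intro sums_divide sums_add; rule sums_pochhammer_shifted_power) (use assms in auto)
  moreover have "(\<lambda>k. remainder_weight n k * y ^ k)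
      = (\<lambda>k. (pochhammer (real k - real 0) (2 * n) * y ^ k + pochhammer (real k - real 1) (2 * n) * y ^ k) / 2)"
    by (simp add: remainder_weight_def field_simps)
  moreover have "(y ^ Suc 0 * F / D + y ^ Suc 1 * F / D) / 2 = F / 2 * (y * (1 + y)) / D" for F D :: real
    by (cases "D = 0") (simp_all add: field_simps power2_eq_square)
  ultimately show ?thesis
    by (simp only: Suc_eq_plus1[of "2 * n"])
qed

section \<open>Power series\<close>

lemma powser_constant_term_eq_zero:
  fixes e :: "nat \<Rightarrow> real"
  assumes "R > 0" and sums: "\<And>s. s \<noteq> 0 \<Longrightarrow> \<bar>s\<bar> < R \<Longrightarrow> (\<lambda>m. e m * s ^ m) sums 0"
  shows "e 0 = 0"
proof -
  define P where "P s = (\<Sum>m. e m * s ^ m)" for s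
  have "summable (\<lambda>m. e m * (R / 2) ^ m)"
    using sums[of "R / 2"] \<open>R > 0\<close> by (auto simp: sums_iff)
  hence "(P \<longlongrightarrow> P 0) (at 0)"
    unfolding P_def using \<open>R > 0\<close> by (intro isCont_powser[unfolded isCont_def]) auto
  moreover have "eventually (\<lambda>s. s \<in> ball 0 R - {0}) (at (0::real))"
    by (rule eventually_at_in_open) (use \<open>R > 0\<close> in auto)
  hence "eventually (\<lambda>s. P s = 0) (at 0)"
    by eventually_elim (use sums in \<open>auto simp: P_def sums_iff dist_norm\<close>)
  hence "(P \<longlongrightarrow> 0) (at 0)"
    by (rule tendsto_eventually)
  ultimately show "e 0 = 0"
    using tendsto_unique[of "at (0::real)"] by (force simp: P_def)
qed

lemma powser_eq_zero_on_punctured_ball: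
  fixes e :: "nat \<Rightarrow> real"
  assumes "R > 0" and "\<And>s. s \<noteq> 0 \<Longrightarrow> \<bar>s\<bar> < R \<Longrightarrow> (\<lambda>m. e m * s ^ m) sums 0"
  shows "e m = 0"
  using assms(2)
proof (induction m arbitrary: e)
  case 0
  show ?case
    using powser_constant_term_eq_zero[OF \<open>R > 0\<close> 0] .
next
  case (Suc m)
  have "(\<lambda>k. e (Suc k) * s ^ k) sums 0" if "s \<noteq> 0" "\<bar>s\<bar> < R" for s
  proof -
    have "(\<lambda>k. e (Suc k) * s ^ Suc k) sums 0"
      using Suc.prems[OF that] powser_constant_term_eq_zero[OF \<open>R > 0\<close> Suc.prems]
        sums_Suc_iff[of "\<lambda>m. e m * s ^ m" 0]
      by simp
    hence "(\<lambda>k. e (Suc k) * s ^ k * s / s) sums (0 / s)"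
      by (intro sums_divide) (simp add: mult_ac)
    with that show ?thesis
      by simp
  qed
  thus ?case
    by (rule Suc.IH)
qed

lemma fps_nth_one_plus_const_X_times:
  fixes F :: "'a::comm_ring_1 fps"
  shows "((1 + fps_const c * fps_X) * F) $ n = (if n = 0 then F $ 0 else F $ n + c * F $ (n - 1))"
  by (cases n) (simp_all add: distrib_right mult.assoc)

lemma sum_fps_mult_times_power:
  fixes P Q :: "'a::comm_semiring_1 fps"
  shows "(\<Sum>i<n. (P * Q) $ i * u ^ i) = (\<Sum>r<n. P $ r * u ^ r * (\<Sum>s<n - r. Q $ s * u ^ s))"
proof -
  have "(\<Sum>i<n. (P * Q) $ i * u ^ i) = (\<Sum>i<n. \<Sum>r\<le>i. P $ r * u ^ r * (Q $ (i - r) * u ^ (i - r)))"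
  proof (rule sum.cong[OF refl])
    fix i
    have "(P * Q) $ i * u ^ i = (\<Sum>r\<le>i. P $ r * Q $ (i - r) * u ^ i)"
      by (simp add: fps_mult_nth atLeast0AtMost sum_distrib_right)
    also have "\<dots> = (\<Sum>r\<le>i. P $ r * u ^ r * (Q $ (i - r) * u ^ (i - r)))"
    proof (rule sum.cong[OF refl])
      fix r assume "r \<in> {..i}"
      hence "u ^ i = u ^ r * u ^ (i - r)"
        by (simp flip: power_add)
      thus "P $ r * Q $ (i - r) * u ^ i = P $ r * u ^ r * (Q $ (i - r) * u ^ (i - r))"
        by (simp add: mult_ac)
    qed
    finally show "(P * Q) $ i * u ^ i = (\<Sum>r\<le>i. P $ r * u ^ r * (Q $ (i - r) * u ^ (i - r)))" .
  qed
  also have "\<dots> = (\<Sum>(r, s)\<in>{(r, s). r + s < n}. P $ r * u ^ r * (Q $ s * u ^ s))"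
    by (rule sum.triangle_reindex[symmetric])
  also have "{(r, s). r + s < n} = Sigma {..<n} (\<lambda>r. {..<n - r})"
    by auto
  finally show ?thesis
    by (simp add: sum.Sigma sum_distrib_left)
qed

lemma product_minus_truncation:
  fixes P Q :: "'a::comm_ring_1 fps"
  shows "f * g - (\<Sum>i<n. (P * Q) $ i * u ^ i)
           = (f - (\<Sum>i<n. P $ i * u ^ i)) * g + (\<Sum>r<n. P $ r * u ^ r * (g - (\<Sum>s<n - r. Q $ s * u ^ s)))"
proof -
  have "(\<Sum>r<n. P $ r * u ^ r * (g - (\<Sum>s<n - r. Q $ s * u ^ s)))
      = (\<Sum>i<n. P $ i * u ^ i) * g - (\<Sum>i<n. (P * Q) $ i * u ^ i)"
    by (simp add: sum_fps_mult_times_power right_diff_distrib sum_subtractf sum_distrib_right)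
  thus ?thesis
    by (simp add: left_diff_distrib)
qed

definition geometric_fps :: "'a::comm_ring_1 \<Rightarrow> 'a fps" where
  "geometric_fps c = Abs_fps (\<lambda>n. c ^ n)"

lemma geometric_fps_nth [simp]: "geometric_fps c $ n = c ^ n"
  by (simp add: geometric_fps_def)

lemma geometric_fps_inverse: "(1 + fps_const c * fps_X) * geometric_fps (- c) = 1"
proof (rule fps_ext)
  fix n
  show "((1 + fps_const c * fps_X) * geometric_fps (- c)) $ n = 1 $ n"
    by (cases n) (simp_all add: fps_nth_one_plus_const_X_times geometric_fps_def)
qed

lemma sum_binomial_lower: "(\<Sum>i\<le>n. (i + k - 1) choose i) = (n + k) choose n"
proof (cases k)
  case 0
  thus ?thesis
    by (induction n) (simp_all add: binomial_eq_0)
next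
  case (Suc k')
  thus ?thesis
    using sum_choose_lower[of k' n] by (simp add: add.commute)
qed

lemma geometric_fps_power_nth: "(geometric_fps K ^ k) $ n = real ((n + k - 1) choose n) * K ^ n"
proof (induction k arbitrary: n)
  case 0
  thus ?case
    by (cases n) (simp_all add: binomial_eq_0)
next
  case (Suc k)
  have "(geometric_fps K ^ Suc k) $ n = (\<Sum>i\<le>n. real ((i + k - 1) choose i) * K ^ i * K ^ (n - i))"
    by (simp add: power_Suc2 fps_mult_nth atLeast0AtMost Suc.IH del: power_Suc)
  also have "\<dots> = (\<Sum>i\<le>n. real ((i + k - 1) choose i)) * K ^ n"
    by (simp add: sum_distrib_right mult.assoc flip: power_add)
  also have "(\<Sum>i\<le>n. real ((i + k - 1) choose i)) = real ((n + Suc k - 1) choose n)"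
    unfolding of_nat_sum[symmetric] sum_binomial_lower by simp
  finally show ?case .
qed

section \<open>Majorized expansions\<close>

definition majorizes :: "real fps \<Rightarrow> real fps \<Rightarrow> bool" where
  "majorizes M P \<longleftrightarrow> (\<forall>n. \<bar>P $ n\<bar> \<le> M $ n)"

lemma majorizes_nonneg: "majorizes M P \<Longrightarrow> 0 \<le> M $ n"
  unfolding majorizes_def by (meson abs_ge_zero order_trans)

lemma majorizes_one: "majorizes 1 1"
  by (simp add: majorizes_def)

lemma majorizes_mult:
  assumes "majorizes M P" and "majorizes N Q"
  shows "majorizes (M * N) (P * Q)"
  unfolding majorizes_def
proof
  fix n
  have "\<bar>(P * Q) $ n\<bar> \<le> (\<Sum>i=0..n. \<bar>P $ i\<bar> * \<bar>Q $ (n - i)\<bar>)"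
    unfolding fps_mult_nth abs_mult[symmetric] by (rule sum_abs)
  also have "\<dots> \<le> (\<Sum>i=0..n. M $ i * N $ (n - i))"
    using assms majorizes_nonneg[OF assms(1)] by (intro sum_mono mult_mono) (auto simp: majorizes_def)
  finally show "\<bar>(P * Q) $ n\<bar> \<le> (M * N) $ n"
    by (simp add: fps_mult_nth)
qed

lemma majorizes_prod:
  assumes "\<And>m. m \<in> A \<Longrightarrow> majorizes (M m) (P m)"
  shows "majorizes (\<Prod>m\<in>A. M m) (\<Prod>m\<in>A. P m)"
  using assms by (induction A rule: infinite_finite_induct) (auto intro: majorizes_one majorizes_mult)

lemma majorizes_geometric_fps_power:
  assumes "\<And>m. m < k \<Longrightarrow> majorizes (geometric_fps K) (P m)"
  shows "majorizes (geometric_fps K ^ k) (\<Prod>m<k. P m)"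
  using majorizes_prod[of "{..<k}" "\<lambda>_. geometric_fps K" P] assms by simp

lemma abs_coef_le_pochhammer:
  assumes "majorizes (geometric_fps (real k / c) ^ k) (Abs_fps f)" and "0 < c"
  shows "\<bar>f j\<bar> \<le> pochhammer (real k) (2 * j) / c ^ j"
proof -
  have "\<bar>f j\<bar> \<le> real ((j + k - 1) choose j) * real k ^ j / c ^ j"
    using assms(1) by (simp add: majorizes_def geometric_fps_power_nth power_divide)
  also have "\<dots> \<le> pochhammer (real k) (2 * j) / fact j / c ^ j"
    using assms(2) by (intro divide_right_mono binomial_times_power_le_pochhammer) auto
  also have "\<dots> \<le> pochhammer (real k) (2 * j) / c ^ j"
  proof (intro divide_right_mono)
    show "pochhammer (real k) (2 * j) / fact j \<le> pochhammer (real k) (2 * j)"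
      using divide_left_mono[of 1 "fact j" "pochhammer (real k) (2 * j)"]
      by (simp add: pochhammer_nonneg_of_nonneg)
  qed (use assms(2) in auto)
  finally show ?thesis .
qed

(* The normalisations P $ 0 = 1 and |f| \<le> 1 make the notion stable under products. *)
definition majorized_expansion :: "real fps \<Rightarrow> real fps \<Rightarrow> (real \<Rightarrow> real) \<Rightarrow> bool" where
  "majorized_expansion M P f \<longleftrightarrow> P $ 0 = 1 \<and> majorizes M P \<and> (\<forall>u \<ge> 0. \<bar>f u\<bar> \<le> 1) \<and>
     (\<forall>n u. 0 \<le> u \<longrightarrow> \<bar>f u - (\<Sum>i<n. P $ i * u ^ i)\<bar> \<le> M $ n * u ^ n)"

lemma majorized_expansion_one: "majorized_expansion 1 1 (\<lambda>_. 1)"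
proof -
  have "(\<Sum>i<n. (1 :: real fps) $ i * u ^ i) = (if n = 0 then 0 else 1)" for n and u :: real
    by (induction n) simp_all
  thus ?thesis
    by (auto simp: majorized_expansion_def majorizes_one)
qed

lemma majorized_expansion_mult:
  assumes f: "majorized_expansion M P f" and g: "majorized_expansion N Q g"
  shows "majorized_expansion (M * N) (P * Q) (\<lambda>u. f u * g u)"
  unfolding majorized_expansion_def
proof (intro conjI allI impI)
  show "(P * Q) $ 0 = 1" "majorizes (M * N) (P * Q)"
    using f g by (auto simp: majorized_expansion_def intro: majorizes_mult)
  show "\<bar>f u * g u\<bar> \<le> 1" if "0 \<le> u" for u
    using f g that by (simp add: majorized_expansion_def abs_mult mult_le_one)
  fix n :: nat and u :: real
  assume u: "0 \<le> u"
  define T where "T F k = (\<Sum>i<k. F $ i * u ^ i)" for F :: "real fps" and k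
  have M: "majorizes M P" and N: "majorizes N Q" and "Q $ 0 = 1"
    using f g by (simp_all add: majorized_expansion_def)
  hence N0: "1 \<le> N $ 0"
    unfolding majorizes_def by (metis abs_one)
  have rem_f: "\<bar>f u - T P n\<bar> \<le> M $ n * u ^ n" and g1: "\<bar>g u\<bar> \<le> 1"
    using f g u by (simp_all add: majorized_expansion_def T_def)
  have rem_g: "\<bar>P $ r * u ^ r * (g u - T Q (n - r))\<bar> \<le> M $ r * N $ (n - r) * u ^ n" if "r < n" for r
  proof -
    have "\<bar>g u - T Q (n - r)\<bar> \<le> N $ (n - r) * u ^ (n - r)"
      using g u by (simp add: majorized_expansion_def T_def)
    hence "\<bar>P $ r\<bar> * (u ^ r * \<bar>g u - T Q (n - r)\<bar>) \<le> M $ r * (u ^ r * (N $ (n - r) * u ^ (n - r)))"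
      using M u majorizes_nonneg[OF M] by (intro mult_mono mult_left_mono) (auto simp: majorizes_def)
    also have "\<dots> = M $ r * N $ (n - r) * (u ^ r * u ^ (n - r))"
      by (simp only: mult_ac)
    also have "u ^ r * u ^ (n - r) = u ^ n"
      using that by (simp flip: power_add)
    finally show ?thesis
      using u by (simp add: abs_mult mult_ac)
  qed
  have "f u * g u - T (P * Q) n = (f u - T P n) * g u + (\<Sum>r<n. P $ r * u ^ r * (g u - T Q (n - r)))"
    unfolding T_def by (rule product_minus_truncation)
  hence "\<bar>f u * g u - T (P * Q) n\<bar> \<le> \<bar>(f u - T P n) * g u\<bar> + \<bar>\<Sum>r<n. P $ r * u ^ r * (g u - T Q (n - r))\<bar>"
    by (simp only: abs_triangle_ineq)
  also have "\<dots> \<le> \<bar>f u - T P n\<bar> * \<bar>g u\<bar> + (\<Sum>r<n. \<bar>P $ r * u ^ r * (g u - T Q (n - r))\<bar>)"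
    by (intro add_mono sum_abs) (simp add: abs_mult)
  also have "\<dots> \<le> M $ n * N $ 0 * u ^ n + (\<Sum>r<n. M $ r * N $ (n - r) * u ^ n)"
  proof (intro add_mono sum_mono rem_g)
    have "\<bar>f u - T P n\<bar> * \<bar>g u\<bar> \<le> M $ n * u ^ n * 1"
      using rem_f g1 by (intro mult_mono) auto
    also have "\<dots> \<le> M $ n * u ^ n * N $ 0"
      using N0 u majorizes_nonneg[OF M] by (intro mult_left_mono) auto
    finally show "\<bar>f u - T P n\<bar> * \<bar>g u\<bar> \<le> M $ n * N $ 0 * u ^ n"
      by (simp add: mult_ac)
  qed auto
  also have "\<dots> = (M * N) $ n * u ^ n"
    by (simp add: fps_mult_nth atLeast0AtMost lessThan_Suc_atMost[symmetric] sum_distrib_right distrib_right add.commute)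
  finally show "\<bar>f u * g u - (\<Sum>i<n. (P * Q) $ i * u ^ i)\<bar> \<le> (M * N) $ n * u ^ n"
    by (simp add: T_def)
qed

lemma majorized_expansion_prod:
  assumes "\<And>m. m \<in> A \<Longrightarrow> majorized_expansion (M m) (P m) (f m)"
  shows "majorized_expansion (\<Prod>m\<in>A. M m) (\<Prod>m\<in>A. P m) (\<lambda>u. \<Prod>m\<in>A. f m u)"
  using assms
  by (induction A rule: infinite_finite_induct) (auto intro: majorized_expansion_one majorized_expansion_mult)

lemma linear_quotient_fps_nth_Suc:
  fixes p q :: "'a::comm_ring_1"
  shows "((1 + fps_const p * fps_X) * geometric_fps (- q)) $ Suc m = (- q) ^ m * (p - q)"
  by (simp add: fps_nth_one_plus_const_X_times algebra_simps)

lemma linear_quotient_partial_sum: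
  fixes p q u :: "'a::comm_ring_1"
  defines "P \<equiv> (1 + fps_const p * fps_X) * geometric_fps (- q)"
  shows "(1 + q * u) * (\<Sum>i<Suc m. P $ i * u ^ i) = 1 + p * u - (- q) ^ m * u ^ m * (p - q) * u"
proof (induction m)
  case (Suc m)
  have "(1 + q * u) * (\<Sum>i<Suc (Suc m). P $ i * u ^ i)
      = (1 + q * u) * (\<Sum>i<Suc m. P $ i * u ^ i) + (1 + q * u) * (P $ Suc m * u ^ Suc m)"
    by (simp add: distrib_left)
  also have "\<dots> = 1 + p * u - (- q) ^ Suc m * u ^ Suc m * (p - q) * u"
    unfolding Suc.IH unfolding P_def linear_quotient_fps_nth_Suc by (simp add: algebra_simps)
  finally show ?case .
qed (simp add: P_def algebra_simps)

lemma abs_linear_quotient_le_one: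
  fixes p q u :: real
  assumes "0 \<le> p" and "p \<le> q" and "0 \<le> u"
  shows "\<bar>(1 + p * u) / (1 + q * u)\<bar> \<le> 1"
proof -
  have "0 \<le> p * u" "p * u \<le> q * u"
    using assms by (simp_all add: mult_right_mono)
  thus ?thesis
    by (simp add: abs_div_pos divide_le_eq_1)
qed

lemma linear_quotient_remainder_le:
  fixes p q u :: real
  assumes "0 \<le> p" and "p \<le> q" and "0 \<le> u"
  shows "\<bar>(1 + p * u) / (1 + q * u) - (\<Sum>i<n. ((1 + fps_const p * fps_X) * geometric_fps (- q)) $ i * u ^ i)\<bar>
           \<le> q ^ n * u ^ n"
proof (cases n)
  case 0
  thus ?thesis
    using abs_linear_quotient_le_one[OF assms] by simp
next
  case (Suc m)
  let ?P = "(1 + fps_const p * fps_X) * geometric_fps (- q)"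
  have "0 \<le> q" and "1 \<le> 1 + q * u" and pos: "0 < 1 + q * u"
    using assms by (simp_all add: add_pos_nonneg)
  have "(1 + p * u) / (1 + q * u) - (\<Sum>i<n. ?P $ i * u ^ i) = (- q) ^ m * u ^ m * (p - q) * u / (1 + q * u)"
    using linear_quotient_partial_sum[of q u p m] pos unfolding Suc by (simp add: field_simps)
  hence "\<bar>(1 + p * u) / (1 + q * u) - (\<Sum>i<n. ?P $ i * u ^ i)\<bar> = q ^ m * u ^ m * (q - p) * u / (1 + q * u)"
    using assms pos by (simp add: abs_mult power_abs abs_divide)
  also have "\<dots> \<le> q ^ m * u ^ m * (q - p) * u"
    using divide_left_mono[OF \<open>1 \<le> 1 + q * u\<close>, of "q ^ m * u ^ m * (q - p) * u"] assms pos
    by simp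
  also have "\<dots> \<le> q ^ m * u ^ m * q * u"
    using assms \<open>0 \<le> q\<close> by (intro mult_right_mono mult_left_mono) auto
  also have "\<dots> = q ^ n * u ^ n"
    by (simp add: Suc mult_ac)
  finally show ?thesis .
qed

lemma majorized_expansion_linear_quotient:
  fixes p q K :: real
  assumes "0 \<le> p" and "p \<le> q" and "q \<le> K"
  shows "majorized_expansion (geometric_fps K) ((1 + fps_const p * fps_X) * geometric_fps (- q))
           (\<lambda>u. (1 + p * u) / (1 + q * u))"
  unfolding majorized_expansion_def
proof (intro conjI allI impI)
  let ?P = "(1 + fps_const p * fps_X) * geometric_fps (- q)"
  have "0 \<le> q"
    using assms by linarith
  show "?P $ 0 = 1"
    by simp
  show "majorizes (geometric_fps K) ?P"
    unfolding majorizes_def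
  proof
    fix n
    show "\<bar>?P $ n\<bar> \<le> geometric_fps K $ n"
    proof (cases n)
      case (Suc m)
      have "\<bar>?P $ n\<bar> = q ^ m * (q - p)"
        using Suc assms \<open>0 \<le> q\<close> by (simp add: linear_quotient_fps_nth_Suc abs_mult power_abs)
      also have "\<dots> \<le> q ^ m * q"
        using assms \<open>0 \<le> q\<close> by (intro mult_left_mono) auto
      also have "\<dots> \<le> K ^ n"
        unfolding Suc power_Suc2[symmetric] using assms \<open>0 \<le> q\<close> by (intro power_mono) auto
      finally show ?thesis
        by simp
    qed simp
  qed
  fix u :: real
  assume "0 \<le> u"
  show "\<bar>(1 + p * u) / (1 + q * u)\<bar> \<le> 1"
    using abs_linear_quotient_le_one[OF assms(1,2) \<open>0 \<le> u\<close>] .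
  fix n
  have "q ^ n * u ^ n \<le> K ^ n * u ^ n"
    using assms \<open>0 \<le> u\<close> \<open>0 \<le> q\<close> by (intro mult_right_mono power_mono) auto
  with linear_quotient_remainder_le[OF assms(1,2) \<open>0 \<le> u\<close>, of n]
  show "\<bar>(1 + p * u) / (1 + q * u) - (\<Sum>i<n. ?P $ i * u ^ i)\<bar> \<le> geometric_fps K $ n * u ^ n"
    by simp
qed

section \<open>Generalized Bernoulli numbers\<close>

definition exprel_fps :: "complex fps" where
  "exprel_fps = fps_shift 1 (fps_exp 1)"

lemma exprel_fps_nth: "exprel_fps $ n = 1 / fact (Suc n)"
  by (simp add: exprel_fps_def fps_exp_def)

lemma fps_conv_radius_exprel_fps [simp]: "fps_conv_radius exprel_fps = \<infinity>"
  by (simp add: exprel_fps_def)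

lemma exprel_fps_times_X: "exprel_fps * fps_X = fps_exp 1 - 1"
  by (rule fps_ext) (simp add: exprel_fps_nth split: nat.split)

lemma eval_exprel_fps:
  assumes "z \<noteq> 0"
  shows "eval_fps exprel_fps z = (exp z - 1) / z"
proof -
  have "eval_fps exprel_fps z * z = eval_fps (exprel_fps * fps_X) z"
    by (subst eval_fps_mult) auto
  also have "\<dots> = exp z - 1"
    unfolding exprel_fps_times_X by (subst eval_fps_diff) auto
  finally show ?thesis
    using assms by (simp add: field_simps)
qed

lemma eval_exprel_fps_nonzero:
  assumes "norm z < 2 * pi"
  shows "eval_fps exprel_fps z \<noteq> 0"
proof (cases "z = 0")
  case False
  have "exp z \<noteq> 1"
  proof
    assume "exp z = 1"
    then obtain n :: int where "Re z = 0" and Im: "Im z = of_int (2 * n) * pi"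
      by (auto simp: exp_eq_1)
    moreover have "\<bar>Im z\<bar> < 2 * pi"
      using assms abs_Im_le_cmod[of z] by linarith
    ultimately have "n = 0"
      by (auto simp: abs_mult)
    with \<open>Re z = 0\<close> Im False show False
      by (simp add: complex_eq_iff)
  qed
  with False show ?thesis
    by (simp add: eval_exprel_fps)
qed (simp add: eval_fps_at_0 exprel_fps_nth)

lemma exprel_fps_ODE: "fps_X * fps_deriv exprel_fps = 1 + fps_X * exprel_fps - exprel_fps"
proof (rule fps_ext)
  fix n
  show "(fps_X * fps_deriv exprel_fps) $ n = (1 + fps_X * exprel_fps - exprel_fps) $ n"
  proof (cases n)
    case (Suc m)
    have "(of_nat (Suc m) :: complex) / fact (Suc (Suc m)) = 1 / fact (Suc m) - 1 / fact (Suc (Suc m))"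
      by (simp add: fact_Suc[of "Suc m"] divide_simps del: fact_Suc of_nat_Suc) (simp add: algebra_simps)
    with Suc show ?thesis
      by (simp add: exprel_fps_nth)
  qed (simp add: exprel_fps_nth)
qed

definition gen_bernoulli_fps :: "int \<Rightarrow> complex fps" where
  "gen_bernoulli_fps j = exprel_fps powi (- j)"

lemma gen_bernoulli_fps_nth_0 [simp]: "gen_bernoulli_fps j $ 0 = 1"
  by (simp add: gen_bernoulli_fps_def power_int_def fps_nth_power_0 exprel_fps_nth)

lemma gen_bernoulli_fps_sums:
  fixes s :: real
  assumes "s \<noteq> 0" and "\<bar>s\<bar> < 2 * pi"
  shows "(\<lambda>m. Re (gen_bernoulli_fps j $ m) * s ^ m) sums ((s / (exp s - 1)) powi j)"
proof -
  define f where "f z = eval_fps exprel_fps z powi (- j)" for z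
  have "eval_fps exprel_fps has_fps_expansion exprel_fps"
    by (rule eval_fps_has_fps_expansion) simp
  hence "f has_fps_expansion gen_bernoulli_fps j"
    unfolding f_def[abs_def] gen_bernoulli_fps_def power_int_def
    by (cases "- j \<ge> 0") (auto intro!: fps_expansion_intros simp: exprel_fps_nth)
  moreover have "f holomorphic_on eball 0 (ereal (2 * pi))"
  proof -
    have "eval_fps exprel_fps holomorphic_on eball 0 (ereal (2 * pi))"
      by (rule holomorphic_on_eval_fps) simp
    with eval_exprel_fps_nonzero show ?thesis
      unfolding f_def[abs_def] power_int_def
      by (cases "- j \<ge> 0") (auto intro!: holomorphic_intros)
  qed
  ultimately have "(\<lambda>m. gen_bernoulli_fps j $ m * of_real s ^ m) sums f (of_real s)"
    by (rule has_fps_expansion_imp_sums_complex) (use assms in auto)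
  hence "(\<lambda>m. Re (gen_bernoulli_fps j $ m * of_real s ^ m)) sums Re (f (of_real s))"
    by (simp add: sums_complex_iff)
  moreover have "f (of_real s) = of_real ((s / (exp s - 1)) powi j)"
    using assms by (simp add: f_def eval_exprel_fps exp_of_real power_int_minus flip: power_int_inverse)
  ultimately show ?thesis
    by (simp flip: of_real_power of_real_power_int)
qed

lemma gen_bernoulli_conv_fps: "gen_bernoulli j k = fact k * Re (gen_bernoulli_fps j $ k)"
proof -
  let ?P = "\<lambda>c. \<forall>s::real. s \<noteq> 0 \<and> \<bar>s\<bar> < 2 * pi \<longrightarrow>
        (\<lambda>m. s ^ m / fact m * c m) sums ((s / (exp s - 1)) powi j)"
  have "(THE c. ?P c) = (\<lambda>m. fact m * Re (gen_bernoulli_fps j $ m))"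
  proof (rule the_equality)
    show "?P (\<lambda>m. fact m * Re (gen_bernoulli_fps j $ m))"
      using gen_bernoulli_fps_sums by (simp add: mult_ac)
  next
    fix c assume "?P c"
    have "(c m - fact m * Re (gen_bernoulli_fps j $ m)) / fact m = 0" for m
    proof (rule powser_eq_zero_on_punctured_ball[of "2 * pi"])
      fix s :: real assume s: "s \<noteq> 0" "\<bar>s\<bar> < 2 * pi"
      have "(\<lambda>m. s ^ m / fact m * c m - Re (gen_bernoulli_fps j $ m) * s ^ m) sums
              ((s / (exp s - 1)) powi j - (s / (exp s - 1)) powi j)"
        using \<open>?P c\<close> s by (intro sums_diff gen_bernoulli_fps_sums) auto
      thus "(\<lambda>m. (c m - fact m * Re (gen_bernoulli_fps j $ m)) / fact m * s ^ m) sums 0"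
        by (simp add: field_simps)
    qed simp
    thus "c = (\<lambda>m. fact m * Re (gen_bernoulli_fps j $ m))"
      by auto
  qed
  thus ?thesis
    by (simp add: gen_bernoulli_def)
qed

lemma gen_bernoulli_fps_ODE:
  "fps_X * fps_deriv (gen_bernoulli_fps k) = of_int k * gen_bernoulli_fps k
     - of_int k * fps_X * gen_bernoulli_fps k - of_int k * gen_bernoulli_fps (k + 1)"
proof (cases "k \<ge> 0")
  case True
  then obtain n where k: "k = int n"
    using nonneg_eq_int by blast
  define H where "H = inverse exprel_fps"
  have EH: "exprel_fps * H = 1"
    unfolding H_def by (rule inverse_mult_eq_1') (simp add: exprel_fps_nth)
  have "fps_X * fps_deriv H = - (fps_X * fps_deriv exprel_fps) * H\<^sup>2"
    by (simp add: H_def fps_inverse_deriv exprel_fps_nth)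
  also have "\<dots> = H - fps_X * H - H\<^sup>2"
    using EH by (simp add: exprel_fps_ODE algebra_simps power2_eq_square)
  finally have H_ODE: "fps_X * fps_deriv H = H - fps_X * H - H\<^sup>2" .
  have "fps_X * fps_deriv (H ^ n) = of_nat n * (H ^ n - fps_X * H ^ n - H ^ Suc n)"
  proof (cases n)
    case (Suc m)
    have "fps_X * fps_deriv (H ^ n) = of_nat n * (fps_X * fps_deriv H) * H ^ m"
      unfolding fps_deriv_power' Suc diff_Suc_1 by (simp only: mult_ac)
    also have "\<dots> = of_nat n * (H ^ n - fps_X * H ^ n - H ^ Suc n)"
      by (simp add: H_ODE Suc algebra_simps power2_eq_square)
    finally show ?thesis .
  qed simp
  moreover have "gen_bernoulli_fps k = H ^ n" "gen_bernoulli_fps (k + 1) = H ^ Suc n"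
    by (simp_all add: gen_bernoulli_fps_def H_def power_int_def k nat_add_distrib)
  ultimately show ?thesis
    by (simp add: k algebra_simps)
next
  case False
  then obtain n where k: "k = - int (Suc n)"
    by (intro that[of "nat (- k) - 1"]) auto
  have "fps_X * fps_deriv (exprel_fps ^ Suc n) = of_nat (Suc n) * (fps_X * fps_deriv exprel_fps) * exprel_fps ^ n"
    unfolding fps_deriv_power' diff_Suc_1 by (simp only: mult_ac)
  moreover have "gen_bernoulli_fps k = exprel_fps ^ Suc n" "gen_bernoulli_fps (k + 1) = exprel_fps ^ n"
    by (simp_all add: gen_bernoulli_fps_def power_int_def k nat_add_distrib)
  ultimately show ?thesis
    by (simp add: k exprel_fps_ODE algebra_simps)
qed

lemma gen_bernoulli_fps_nth_rec:
  "of_nat (Suc n) * gen_bernoulli_fps k $ Suc n = of_int k * gen_bernoulli_fps k $ Suc n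
     - of_int k * gen_bernoulli_fps k $ n - of_int k * gen_bernoulli_fps (k + 1) $ Suc n"
  using arg_cong[OF gen_bernoulli_fps_ODE, of "\<lambda>F. F $ Suc n"]
  by (simp add: fps_of_int mult.assoc)

section \<open>The coefficients \<alpha> and \<gamma>\<close>

lemma alpha_coef_conv_fps:
  "alpha_coef \<beta> k n = pochhammer (1 - real k) n * Re (gen_bernoulli_fps (int k) $ n) / (1 + \<beta>) ^ n"
  by (simp add: alpha_coef_def gen_bernoulli_conv_fps power_int_minus divide_inverse)

lemma gamma_coef_conv_fps:
  "gamma_coef a k n = (-1) ^ n * pochhammer (real k + 1) n * Re (gen_bernoulli_fps (- int k) $ n) / a ^ n"
  by (simp add: gamma_coef_def gen_bernoulli_conv_fps power_int_minus divide_inverse)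

lemma alpha_coef_right_0 [simp]: "alpha_coef \<beta> k 0 = 1"
  by (simp add: alpha_coef_conv_fps)

lemma gamma_coef_right_0 [simp]: "gamma_coef a k 0 = 1"
  by (simp add: gamma_coef_conv_fps)

lemma alpha_coef_0_left: "alpha_coef \<beta> 0 n = (if n = 0 then 1 else 0)"
  by (simp add: alpha_coef_conv_fps gen_bernoulli_fps_def)

lemma gamma_coef_0_left: "gamma_coef a 0 n = (if n = 0 then 1 else 0)"
  by (simp add: gamma_coef_conv_fps gen_bernoulli_fps_def)

lemma alpha_coef_Suc:
  "alpha_coef \<beta> (Suc k) (Suc n) = alpha_coef \<beta> k (Suc n) + real k / (1 + \<beta>) * alpha_coef \<beta> k n"
proof -
  define c where "c j m = Re (gen_bernoulli_fps j $ m)" for j m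
  have rec: "real k * c (int k + 1) (Suc n) = (real k - real (Suc n)) * c k (Suc n) - real k * c k n"
    using arg_cong[OF gen_bernoulli_fps_nth_rec[of n "int k"], of Re]
    by (simp add: c_def algebra_simps)
  have "pochhammer (1 - real (Suc k)) (Suc n) = - real k * pochhammer (1 - real k) n"
    by (simp add: pochhammer_rec)
  hence "pochhammer (1 - real (Suc k)) (Suc n) * c (int (Suc k)) (Suc n)
      = - pochhammer (1 - real k) n * (real k * c (int k + 1) (Suc n))"
    by (simp add: add.commute)
  also have "\<dots> = pochhammer (1 - real k) (Suc n) * c k (Suc n) + real k * (pochhammer (1 - real k) n * c k n)"
    unfolding rec by (simp add: pochhammer_Suc algebra_simps)
  finally have "pochhammer (1 - real (Suc k)) (Suc n) * c (int (Suc k)) (Suc n)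
      = pochhammer (1 - real k) (Suc n) * c k (Suc n) + real k * (pochhammer (1 - real k) n * c k n)" .
  moreover have "(A + real k * B) / b ^ Suc n = A / b ^ Suc n + real k / b * (B / b ^ n)" for A B b :: real
    by (cases "b = 0") (simp_all add: field_simps)
  ultimately show ?thesis
    by (simp add: alpha_coef_conv_fps c_def)
qed

lemma gamma_coef_Suc:
  "gamma_coef a k (Suc n) = gamma_coef a (Suc k) (Suc n) + real (Suc k) / a * gamma_coef a (Suc k) n"
proof -
  define d where "d j m = Re (gen_bernoulli_fps (- int j) $ m)" for j m
  have rec: "real (Suc k) * d k (Suc n) = (real n + real k + 2) * d (Suc k) (Suc n) - real (Suc k) * d (Suc k) n"
    using arg_cong[OF gen_bernoulli_fps_nth_rec[of n "- int (Suc k)"], of Re]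
    by (simp add: d_def algebra_simps)
  have "pochhammer (real k + 1) (Suc n) = real (Suc k) * pochhammer (real k + 2) n"
    by (simp add: pochhammer_rec add_ac)
  hence "(-1) ^ Suc n * pochhammer (real k + 1) (Suc n) * d k (Suc n)
      = (-1) ^ Suc n * pochhammer (real k + 2) n * (real (Suc k) * d k (Suc n))"
    by simp
  also have "\<dots> = (-1) ^ Suc n * pochhammer (real (Suc k) + 1) (Suc n) * d (Suc k) (Suc n)
        + real (Suc k) * ((-1) ^ n * pochhammer (real (Suc k) + 1) n * d (Suc k) n)"
    unfolding rec by (simp add: pochhammer_Suc algebra_simps)
  finally have "(-1) ^ Suc n * pochhammer (real k + 1) (Suc n) * d k (Suc n)
      = (-1) ^ Suc n * pochhammer (real (Suc k) + 1) (Suc n) * d (Suc k) (Suc n)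
        + real (Suc k) * ((-1) ^ n * pochhammer (real (Suc k) + 1) n * d (Suc k) n)" .
  thus ?thesis
    by (cases "a = 0") (simp_all add: gamma_coef_conv_fps d_def field_simps)
qed

definition alpha_fps :: "real \<Rightarrow> nat \<Rightarrow> real fps" where
  "alpha_fps \<beta> k = Abs_fps (alpha_coef \<beta> k)"

definition gamma_fps :: "real \<Rightarrow> nat \<Rightarrow> real fps" where
  "gamma_fps a k = Abs_fps (gamma_coef a k)"

lemma alpha_fps_eq_prod: "alpha_fps \<beta> k = (\<Prod>m<k. 1 + fps_const (real m / (1 + \<beta>)) * fps_X)"
proof (induction k)
  case 0
  show ?case
    by (rule fps_ext) (simp add: alpha_fps_def alpha_coef_0_left)
next
  case (Suc k)
  have "alpha_fps \<beta> (Suc k) = (1 + fps_const (real k / (1 + \<beta>)) * fps_X) * alpha_fps \<beta> k"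
  proof (rule fps_ext)
    fix n
    show "alpha_fps \<beta> (Suc k) $ n = ((1 + fps_const (real k / (1 + \<beta>)) * fps_X) * alpha_fps \<beta> k) $ n"
      by (cases n) (simp_all add: alpha_fps_def fps_nth_one_plus_const_X_times alpha_coef_Suc)
  qed
  with Suc.IH show ?case
    by (simp add: mult.commute)
qed

lemma gamma_fps_eq_prod: "gamma_fps a k = (\<Prod>m<k. geometric_fps (- real (Suc m) / a))"
proof (induction k)
  case 0
  show ?case
    by (rule fps_ext) (simp add: gamma_fps_def gamma_coef_0_left)
next
  case (Suc k)
  let ?q = "real (Suc k) / a"
  have "gamma_fps a k = (1 + fps_const ?q * fps_X) * gamma_fps a (Suc k)"
  proof (rule fps_ext)
    fix n
    show "gamma_fps a k $ n = ((1 + fps_const ?q * fps_X) * gamma_fps a (Suc k)) $ n"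
      by (cases n) (simp_all add: gamma_fps_def fps_nth_one_plus_const_X_times gamma_coef_Suc[of a k])
  qed
  hence "geometric_fps (- ?q) * gamma_fps a k
      = (geometric_fps (- ?q) * (1 + fps_const ?q * fps_X)) * gamma_fps a (Suc k)"
    by (simp only: mult.assoc)
  also have "\<dots> = gamma_fps a (Suc k)"
    using geometric_fps_inverse[of ?q] by (simp add: mult.commute)
  finally have "geometric_fps (- ?q) * gamma_fps a k = gamma_fps a (Suc k)" .
  with Suc.IH show ?case
    by (simp add: mult.commute minus_divide_left)
qed

lemma majorizes_alpha_fps:
  assumes "0 < 1 + \<beta>"
  shows "majorizes (geometric_fps (real k / (1 + \<beta>)) ^ k) (alpha_fps \<beta> k)"
  unfolding alpha_fps_eq_prod
proof (rule majorizes_geometric_fps_power)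
  fix m assume "m < k"
  hence "real m / (1 + \<beta>) \<le> real k / (1 + \<beta>)"
    using assms by (intro divide_right_mono) auto
  with assms show "majorizes (geometric_fps (real k / (1 + \<beta>))) (1 + fps_const (real m / (1 + \<beta>)) * fps_X)"
    by (auto simp: majorizes_def fps_nth_one_plus_const_X_times le_Suc_eq)
qed

lemma majorizes_gamma_fps:
  assumes "0 < a"
  shows "majorizes (geometric_fps (real k / a) ^ k) (gamma_fps a k)"
  unfolding gamma_fps_eq_prod
proof (rule majorizes_geometric_fps_power)
  fix m assume "m < k"
  hence "real (Suc m) / a \<le> real k / a"
    using assms by (intro divide_right_mono) auto
  with assms show "majorizes (geometric_fps (real k / a)) (geometric_fps (- real (Suc m) / a))"
    unfolding majorizes_def by (simp add: power_abs power_mono del: of_nat_Suc)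
qed

lemma summable_coef_product:
  assumes "0 < a" and "0 < 1 + \<beta>" and "\<bar>y\<bar> < 1"
  shows "summable (\<lambda>k. gamma_coef a k j * alpha_coef \<beta> k l * y ^ k)"
proof (rule summable_comparison_test')
  define C where "C = 1 / (a ^ j * (1 + \<beta>) ^ l)"
  show "summable (\<lambda>k. C * (pochhammer (real k + 1) (2 * (j + l)) * \<bar>y\<bar> ^ k))"
    using sums_pochhammer_power[of "\<bar>y\<bar>"] assms by (intro summable_mult) (auto simp: sums_iff)
  fix k
  have "\<bar>gamma_coef a k j * alpha_coef \<beta> k l\<bar>
      \<le> pochhammer (real k) (2 * j) / a ^ j * (pochhammer (real k) (2 * l) / (1 + \<beta>) ^ l)"
    unfolding abs_mult using assms
    by (intro mult_mono abs_coef_le_pochhammer[OF majorizes_gamma_fps[unfolded gamma_fps_def]]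
        abs_coef_le_pochhammer[OF majorizes_alpha_fps[unfolded alpha_fps_def]])
      (auto simp: pochhammer_nonneg_of_nonneg)
  also have "\<dots> = C * (pochhammer (real k) (2 * j) * pochhammer (real k) (2 * l))"
    by (simp add: C_def)
  also have "\<dots> \<le> C * pochhammer (real k + 1) (2 * (j + l))"
  proof (intro mult_left_mono)
    have "pochhammer (real k) (2 * j) * pochhammer (real k) (2 * l) \<le> pochhammer (real k) (2 * j + 2 * l)"
      by (intro pochhammer_mult_le) auto
    also have "\<dots> \<le> pochhammer (real k + 1) (2 * (j + l))"
      by (simp add: pochhammer_mono algebra_simps)
    finally show "pochhammer (real k) (2 * j) * pochhammer (real k) (2 * l) \<le> pochhammer (real k + 1) (2 * (j + l))" .
  qed (use assms in \<open>simp add: C_def\<close>)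
  finally have "\<bar>gamma_coef a k j * alpha_coef \<beta> k l\<bar> * \<bar>y\<bar> ^ k
      \<le> C * pochhammer (real k + 1) (2 * (j + l)) * \<bar>y\<bar> ^ k"
    by (rule mult_right_mono) simp
  thus "norm (gamma_coef a k j * alpha_coef \<beta> k l * y ^ k)
      \<le> C * (pochhammer (real k + 1) (2 * (j + l)) * \<bar>y\<bar> ^ k)"
    by (simp add: abs_mult power_abs mult.assoc)
qed

section \<open>The hypergeometric function\<close>

definition pochhammer_ratio :: "real \<Rightarrow> real \<Rightarrow> nat \<Rightarrow> real \<Rightarrow> real" where
  "pochhammer_ratio a b k u = (\<Prod>m<k. (1 + real m / b * u) / (1 + real (Suc m) / a * u))"

lemma pochhammer_quotient_eq_ratio:
  assumes "0 < a" and "0 < b" and "0 < t"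
  shows "pochhammer (t * b) k / pochhammer (a * t + 1) k = (b / a) ^ k * pochhammer_ratio a b k (1 / t)"
proof (induction k)
  case (Suc k)
  have "0 < pochhammer (a * t + 1) k"
    using assms by (intro pochhammer_pos) (simp add: add_pos_nonneg)
  moreover have pos: "0 < a * t + 1 + real k"
    using assms by (simp add: add_pos_nonneg)
  ultimately have "pochhammer (t * b) (Suc k) / pochhammer (a * t + 1) (Suc k)
      = pochhammer (t * b) k / pochhammer (a * t + 1) k * ((t * b + real k) / (a * t + 1 + real k))"
    by (simp add: pochhammer_Suc field_simps)
  also note Suc.IH
  also have "(t * b + real k) / (a * t + 1 + real k)
      = b / a * ((1 + real k / b * (1 / t)) / (1 + real (Suc k) / a * (1 / t)))"
  proof -
    have "1 + real k / b * (1 / t) = (t * b + real k) / (b * t)"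
      and "1 + real (Suc k) / a * (1 / t) = (a * t + 1 + real k) / (a * t)"
      using assms by (simp_all add: field_simps)
    with assms pos show ?thesis
      by simp
  qed
  also have "(b / a) ^ k * pochhammer_ratio a b k (1 / t) * (b / a * ((1 + real k / b * (1 / t)) / (1 + real (Suc k) / a * (1 / t))))
      = (b / a) ^ Suc k * pochhammer_ratio a b (Suc k) (1 / t)"
    by (simp add: pochhammer_ratio_def)
  finally show ?case .
qed (simp add: pochhammer_ratio_def)

lemma majorized_expansion_pochhammer_ratio:
  assumes "0 < a" and "a \<le> 1 + \<beta>"
  shows "majorized_expansion (geometric_fps (real k / a) ^ k) (gamma_fps a k * alpha_fps \<beta> k)
           (pochhammer_ratio a (1 + \<beta>) k)"
proof -
  have "majorized_expansion (\<Prod>m<k. geometric_fps (real k / a))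
      (\<Prod>m<k. (1 + fps_const (real m / (1 + \<beta>)) * fps_X) * geometric_fps (- (real (Suc m) / a)))
      (\<lambda>u. \<Prod>m<k. (1 + real m / (1 + \<beta>) * u) / (1 + real (Suc m) / a * u))"
  proof (rule majorized_expansion_prod, rule majorized_expansion_linear_quotient)
    fix m assume "m \<in> {..<k}"
    show "0 \<le> real m / (1 + \<beta>)"
      using assms by simp
    have "real m / (1 + \<beta>) \<le> real m / a"
      using assms by (intro divide_left_mono) auto
    also have "\<dots> \<le> real (Suc m) / a"
      using assms by (intro divide_right_mono) auto
    finally show "real m / (1 + \<beta>) \<le> real (Suc m) / a" .
    show "real (Suc m) / a \<le> real k / a"
      using assms \<open>m \<in> {..<k}\<close> by (intro divide_right_mono) auto
  qed
  thus ?thesis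
    by (simp add: gamma_fps_eq_prod alpha_fps_eq_prod pochhammer_ratio_def[abs_def] prod.distrib mult_ac
        minus_divide_left)
qed

lemma abs_pochhammer_ratio_le_one:
  assumes "0 < a" and "a \<le> 1 + \<beta>" and "0 \<le> u"
  shows "\<bar>pochhammer_ratio a (1 + \<beta>) k u\<bar> \<le> 1"
  using majorized_expansion_pochhammer_ratio[OF assms(1,2), of k] assms(3)
  by (simp add: majorized_expansion_def)

lemma pochhammer_ratio_remainder_le:
  assumes "0 < a" and "a \<le> 1 + \<beta>" and "0 \<le> u" and "1 \<le> n"
  shows "\<bar>pochhammer_ratio a (1 + \<beta>) k u - (\<Sum>i<n. (gamma_fps a k * alpha_fps \<beta> k) $ i * u ^ i)\<bar>
           \<le> remainder_weight n k * (u / a) ^ n"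
proof -
  have "\<bar>pochhammer_ratio a (1 + \<beta>) k u - (\<Sum>i<n. (gamma_fps a k * alpha_fps \<beta> k) $ i * u ^ i)\<bar>
      \<le> (geometric_fps (real k / a) ^ k) $ n * u ^ n"
    using majorized_expansion_pochhammer_ratio[OF assms(1,2), of k] assms(3)
    by (simp add: majorized_expansion_def)
  also have "\<dots> = real ((n + k - 1) choose n) * real k ^ n * (u / a) ^ n"
    by (simp add: geometric_fps_power_nth power_divide)
  also have "\<dots> \<le> remainder_weight n k * (u / a) ^ n"
    using assms by (intro mult_right_mono binomial_times_power_le_remainder_weight) auto
  finally show ?thesis .
qed

lemma hyp2f1_eq_suminf_pochhammer_ratio:
  assumes "0 < a" and "0 < b" and "0 < t"
  shows "hyp2f1 1 (t * b) (a * t + 1) x = (\<Sum>k. (b / a * x) ^ k * pochhammer_ratio a b k (1 / t))"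
  unfolding hyp2f1_def
proof (intro arg_cong[where f = suminf] ext)
  fix k
  have "pochhammer 1 k * pochhammer (t * b) k / pochhammer (a * t + 1) k * x ^ k / fact k
      = pochhammer (t * b) k / pochhammer (a * t + 1) k * x ^ k"
    by (simp add: pochhammer_fact[symmetric])
  also have "\<dots> = (b / a * x) ^ k * pochhammer_ratio a b k (1 / t)"
    unfolding pochhammer_quotient_eq_ratio[OF assms] by (simp add: power_mult_distrib power_divide mult_ac)
  finally show "pochhammer 1 k * pochhammer (t * b) k / pochhammer (a * t + 1) k * x ^ k / fact k
      = (b / a * x) ^ k * pochhammer_ratio a b k (1 / t)" .
qed

lemma truncated_expansion_eq_suminf:
  fixes n :: nat and t y :: real
  assumes "0 < a" and "0 < 1 + \<beta>" and "\<bar>y\<bar> < 1"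
  defines "P k \<equiv> (\<Sum>i<n. (gamma_fps a k * alpha_fps \<beta> k) $ i * (1 / t) ^ i)"
  shows "(\<Sum>i<n. \<Sum>j\<le>i. \<Sum>k. gamma_coef a k j * alpha_coef \<beta> k (i - j) / t ^ i * y ^ k)
           = (\<Sum>k. y ^ k * P k)"
    and "summable (\<lambda>k. y ^ k * P k)"
proof -
  define T where "T i j k = gamma_coef a k j * alpha_coef \<beta> k (i - j) * y ^ k / t ^ i" for i j k
  have summable_T: "summable (T i j)" for i j
    unfolding T_def by (intro summable_divide summable_coef_product assms)
  have "(\<Sum>i<n. \<Sum>j\<le>i. T i j k) = y ^ k * P k" for k
    unfolding P_def fps_mult_nth
    by (simp add: T_def atLeast0AtMost gamma_fps_def alpha_fps_def
        sum_distrib_left sum_distrib_right sum_divide_distrib power_one_over mult_ac)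
  moreover have "(\<Sum>i<n. \<Sum>j\<le>i. \<Sum>k. T i j k) = (\<Sum>k. \<Sum>i<n. \<Sum>j\<le>i. T i j k)"
    using summable_T by (simp add: suminf_sum summable_sum)
  moreover have "summable (\<lambda>k. \<Sum>i<n. \<Sum>j\<le>i. T i j k)"
    using summable_T by (intro summable_sum)
  ultimately show "(\<Sum>i<n. \<Sum>j\<le>i. \<Sum>k. gamma_coef a k j * alpha_coef \<beta> k (i - j) / t ^ i * y ^ k)
           = (\<Sum>k. y ^ k * P k)" and "summable (\<lambda>k. y ^ k * P k)"
    by (simp_all add: T_def)
qed

lemma hyp2f1_truncation_error_le:
  fixes \<beta> a x t :: real and n :: nat
  defines "y \<equiv> (1 + \<beta>) / a * x"
  assumes a: "0 < a" "a \<le> 1 + \<beta>" and y: "0 \<le> y" "y < 1" and t: "0 < t" and n: "1 \<le> n"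
  shows "\<bar>hyp2f1 1 (t * (1 + \<beta>)) (a * t + 1) x
            - (\<Sum>i<n. \<Sum>j\<le>i. \<Sum>k. gamma_coef a k j * alpha_coef \<beta> k (i - j) / t ^ i * y ^ k)\<bar>
         \<le> fact (2 * n) / 2 * (y * (1 + y)) / (1 - y) ^ (2 * n + 1) * (1 / (a * t)) ^ n"
proof -
  define u where "u = 1 / t"
  define F where "F k = pochhammer_ratio a (1 + \<beta>) k u" for k
  define P where "P k = (\<Sum>i<n. (gamma_fps a k * alpha_fps \<beta> k) $ i * u ^ i)" for k
  define C where "C = (u / a) ^ n"
  have b: "0 < 1 + \<beta>"
    using a by linarith
  have u: "0 \<le> u"
    using t by (simp add: u_def)
  have summable_F: "summable (\<lambda>k. y ^ k * F k)"
  proof (rule summable_comparison_test'[OF summable_geometric[of y]])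
    show "norm (y ^ k * F k) \<le> y ^ k" for k
      using abs_pochhammer_ratio_le_one[OF a u, of k] y
      by (simp add: F_def abs_mult mult_left_le)
  qed (use y in simp)
  have expansion: "(\<Sum>i<n. \<Sum>j\<le>i. \<Sum>k. gamma_coef a k j * alpha_coef \<beta> k (i - j) / t ^ i * y ^ k)
      = (\<Sum>k. y ^ k * P k)" and summable_P: "summable (\<lambda>k. y ^ k * P k)"
    using truncated_expansion_eq_suminf[OF a(1) b, of y, where n = n and t = t] y
    by (simp_all add: P_def u_def)
  have bound: "norm (y ^ k * F k - y ^ k * P k) \<le> remainder_weight n k * y ^ k * C" for k
  proof -
    have "norm (y ^ k * F k - y ^ k * P k) = y ^ k * \<bar>F k - P k\<bar>"
      using y by (simp add: abs_mult flip: right_diff_distrib)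
    also have "\<dots> \<le> y ^ k * (remainder_weight n k * C)"
      using pochhammer_ratio_remainder_le[OF a u n, of k] y
      by (intro mult_left_mono) (simp_all add: F_def P_def C_def)
    finally show ?thesis
      by (simp add: mult_ac)
  qed
  have weights: "(\<lambda>k. remainder_weight n k * y ^ k * C)
      sums (fact (2 * n) / 2 * (y * (1 + y)) / (1 - y) ^ (2 * n + 1) * C)"
    using y by (intro sums_mult2 remainder_weight_sums n) simp
  have "\<bar>hyp2f1 1 (t * (1 + \<beta>)) (a * t + 1) x
            - (\<Sum>i<n. \<Sum>j\<le>i. \<Sum>k. gamma_coef a k j * alpha_coef \<beta> k (i - j) / t ^ i * y ^ k)\<bar>
      = norm (\<Sum>k. y ^ k * F k - y ^ k * P k)"
    unfolding hyp2f1_eq_suminf_pochhammer_ratio[OF a(1) b t] expansion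
    using suminf_diff[OF summable_F summable_P] by (simp add: F_def u_def y_def)
  also have "\<dots> \<le> (\<Sum>k. remainder_weight n k * y ^ k * C)"
    by (rule norm_suminf_le[OF bound sums_summable[OF weights]])
  also have "\<dots> = fact (2 * n) / 2 * (y * (1 + y)) / (1 - y) ^ (2 * n + 1) * (1 / (a * t)) ^ n"
    using weights by (simp add: sums_iff C_def u_def mult.commute)
  finally show ?thesis .
qed

lemma hyp2f1_remainder_bound:
  fixes \<beta> a x t :: real and n :: nat
  assumes a: "0 < a" "a \<le> 1 + \<beta>" and x: "0 \<le> x" "(1 + \<beta>) / a * x < 1"
    and t: "0 < t" and n: "1 \<le> n"
  shows "\<bar>hyp2f1 1 (t * (1 + \<beta>)) (a * t + 1) x
            - (\<Sum>i<n. \<Sum>j\<le>i. \<Sum>k. gamma_coef a k j * alpha_coef \<beta> k (i - j) / t ^ i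
                                      * ((1 + \<beta>) / a * x) ^ k)\<bar>
         \<le> fact (2 * n) / 2 * ((1 + \<beta>) * x * (a + (1 + \<beta>) * x))
             / (a ^ (n + 2) * (1 - (1 + \<beta>) * x / a) ^ (2 * n + 1)) * (1 / t ^ n)"
proof -
  define y where "y = (1 + \<beta>) / a * x"
  have y: "0 \<le> y" "y < 1"
    using a x by (simp_all add: y_def)
  have "(1 + \<beta>) * x * (a + (1 + \<beta>) * x) = (a * a) * (y * (1 + y))"
    and "(1 + \<beta>) * x / a = y" and "a ^ (n + 2) = (a * a) * a ^ n"
    using a by (simp_all add: y_def field_simps power2_eq_square)
  moreover have "(1 - y) ^ (2 * n + 1) \<noteq> 0"
    using y by simp
  ultimately have "fact (2 * n) / 2 * ((1 + \<beta>) * x * (a + (1 + \<beta>) * x))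
             / (a ^ (n + 2) * (1 - (1 + \<beta>) * x / a) ^ (2 * n + 1)) * (1 / t ^ n)
      = fact (2 * n) / 2 * (y * (1 + y)) / (1 - y) ^ (2 * n + 1) * (1 / (a * t)) ^ n"
    using a t by (simp add: power_one_over power_mult_distrib field_simps)
  with hyp2f1_truncation_error_le[OF a, of x t n] y t n show ?thesis
    by (simp only: y_def)
qed

lemma abs_hyp2f1_le:
  fixes \<beta> a x t :: real
  assumes a: "0 < a" "a \<le> 1 + \<beta>" and x: "0 \<le> x" "(1 + \<beta>) / a * x < 1" and t: "0 < t"
  shows "\<bar>hyp2f1 1 (t * (1 + \<beta>)) (a * t + 1) x\<bar> \<le> 1 / (1 - (1 + \<beta>) / a * x)"
proof -
  define y where "y = (1 + \<beta>) / a * x"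
  have b: "0 < 1 + \<beta>"
    using a by linarith
  have y: "0 \<le> y" "y < 1"
    using a x b by (auto simp: y_def)
  have "\<bar>hyp2f1 1 (t * (1 + \<beta>)) (a * t + 1) x\<bar> = norm (\<Sum>k. y ^ k * pochhammer_ratio a (1 + \<beta>) k (1 / t))"
    by (simp add: hyp2f1_eq_suminf_pochhammer_ratio[OF a(1) b t] y_def)
  also have "\<dots> \<le> (\<Sum>k. y ^ k)"
  proof (rule norm_suminf_le)
    show "norm (y ^ k * pochhammer_ratio a (1 + \<beta>) k (1 / t)) \<le> y ^ k" for k
      using abs_pochhammer_ratio_le_one[OF a, of "1 / t" k] y t by (simp add: abs_mult mult_left_le)
  qed (use y in simp)
  also have "\<dots> = 1 / (1 - y)"
    using y by (simp add: suminf_geometric)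
  finally show ?thesis
    by (simp add: y_def)
qed

lemma sum_expansion_coef_eq:
  fixes \<beta> a x t :: real
  assumes "0 < a" and "0 < 1 + \<beta>" and "\<bar>(1 + \<beta>) / a * x\<bar> < 1"
  shows "(\<Sum>i<n. expansion_coef \<beta> a x i / t ^ i)
    = (\<Sum>i<n. \<Sum>j\<le>i. \<Sum>k. gamma_coef a k j * alpha_coef \<beta> k (i - j) / t ^ i * ((1 + \<beta>) / a * x) ^ k)"
  unfolding expansion_coef_def sum_divide_distrib
  using summable_coef_product[OF assms] by (simp add: suminf_divide)

lemma hyp2f1_expansion_bigo:
  fixes \<beta> a x :: real and n :: nat
  assumes a: "0 < a" "a \<le> 1 + \<beta>" and x: "0 \<le> x" "(1 + \<beta>) / a * x < 1"
  shows "(\<lambda>t. hyp2f1 1 (t * (1 + \<beta>)) (a * t + 1) x - (\<Sum>i<n. expansion_coef \<beta> a x i / t ^ i))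
           \<in> O[at_top](\<lambda>t. 1 / t ^ n)"
proof (cases "n = 0")
  case True
  have "eventually (\<lambda>t. norm (hyp2f1 1 (t * (1 + \<beta>)) (a * t + 1) x - (\<Sum>i<n. expansion_coef \<beta> a x i / t ^ i))
      \<le> 1 / (1 - (1 + \<beta>) / a * x) * norm (1 / t ^ n)) at_top"
    using eventually_gt_at_top[of 0]
    by eventually_elim (use abs_hyp2f1_le[OF a x] True in simp)
  thus ?thesis
    by (rule bigoI)
next
  case False
  define c where "c = fact (2 * n) / 2 * ((1 + \<beta>) * x * (a + (1 + \<beta>) * x))
    / (a ^ (n + 2) * (1 - (1 + \<beta>) * x / a) ^ (2 * n + 1))"
  have b: "0 < 1 + \<beta>"
    using a by linarith
  have "\<bar>(1 + \<beta>) / a * x\<bar> < 1"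
    using a b x by simp
  note expansion = sum_expansion_coef_eq[OF a(1) b this]
  have "eventually (\<lambda>t. norm (hyp2f1 1 (t * (1 + \<beta>)) (a * t + 1) x - (\<Sum>i<n. expansion_coef \<beta> a x i / t ^ i))
      \<le> c * norm (1 / t ^ n)) at_top"
    using eventually_gt_at_top[of 0]
  proof eventually_elim
    case (elim t)
    with hyp2f1_remainder_bound[OF a x elim, of n] False show ?case
      by (simp add: expansion c_def)
  qed
  thus ?thesis
    by (rule bigoI)
qed

theorem theorem5:
  fixes \<beta> a x :: real
  assumes "\<beta> \<ge> 0" and "0 < a" and "a \<le> 1 + \<beta>"
    and "0 \<le> x" and "x \<le> (1 + \<beta>) / a * x" and "(1 + \<beta>) / a * x < 1"
  shows "(\<forall>n::nat. \<forall>t::real. n \<ge> 1 \<longrightarrow> t > 0 \<longrightarrow>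
           \<bar>hyp2f1 1 (t * (1 + \<beta>)) (a * t + 1) x
              - (\<Sum>i<n. \<Sum>j\<le>i. \<Sum>k. gamma_coef a k j * alpha_coef \<beta> k (i - j) / t ^ i
                                        * ((1 + \<beta>) / a * x) ^ k)\<bar>
           \<le> fact (2 * n) / 2 * ((1 + \<beta>) * x * (a + (1 + \<beta>) * x))
               / (a ^ (n + 2) * (1 - (1 + \<beta>) * x / a) ^ (2 * n + 1)) * (1 / t ^ n))
       \<and> (\<forall>n::nat. (\<lambda>t::real. hyp2f1 1 (t * (1 + \<beta>)) (a * t + 1) x
                       - (\<Sum>i<n. expansion_coef \<beta> a x i / t ^ i))
                   \<in> O[at_top](\<lambda>t. 1 / t ^ n))"
  using hyp2f1_remainder_bound[OF assms(2,3,4,6)] hyp2f1_expansion_bigo[OF assms(2,3,4,6)] by blast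

end
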